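(* Let $t\ge 2$ and let $\mathcal{P}_t$ be the semilattice on $\{0,1,\dots,t\}$ in which $0$ is the greatest element and $1,\dots,t$ are pairwise incomparable (so $i+j=0$ for $i\ne j$ and $i+i=i$). Let $\operatorname{End}^0(\mathcal{P}_t)$ be the set of endomorphisms of $\mathcal{P}_t$ fixing $0$. Then $\operatorname{End}^0(\mathcal{P}_t)$ is a subsemiring of $\operatorname{End}(\mathcal{P}_t)$, this subsemiring is isomorphic to the rook semiring $\mathcal{R}_t$, and every endomorphism in $\operatorname{End}(\mathcal{P}_t)\setminus\operatorname{End}^0(\mathcal{P}_t)$ is a constant map.
   Context: For a semilattice $\mathcal{A}=(A,+)$, $\operatorname{End}(\mathcal{A})$ is the semiring of all maps $\alpha:A\to A$ with $(a+b)\alpha=a\alpha+b\alpha$, under pointwise addition and composition (maps written on the right, $a(\alpha\beta)=(a\alpha)\beta$). A $t\times t$ rook matrix is a $0$-$1$ matrix with at most one entry $1$ in each row and each column. The rook semiring $\mathcal{R}_t$ is the set $R_t$ of all $t\times t$ rook matrices with addition the entrywise (Hadamard) product $a+b=(a_{ij}b_{ij})$ and multiplication the usual matrix product. *)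

theory Defs
  imports "HOL-Library.FuncSet"
begin

definition Pt_carrier :: "nat \<Rightarrow> nat set" where
  "Pt_carrier t = {0..t}"

definition Pt_add :: "nat \<Rightarrow> nat \<Rightarrow> nat" where
  "Pt_add i j = (if i = j then i else 0)"

definition End_Pt :: "nat \<Rightarrow> (nat \<Rightarrow> nat) set" where
  "End_Pt t = {\<alpha> \<in> Pt_carrier t \<rightarrow>\<^sub>E Pt_carrier t.
      \<forall>a\<in>Pt_carrier t. \<forall>b\<in>Pt_carrier t. \<alpha> (Pt_add a b) = Pt_add (\<alpha> a) (\<alpha> b)}"

definition End0_Pt :: "nat \<Rightarrow> (nat \<Rightarrow> nat) set" where
  "End0_Pt t = {\<alpha> \<in> End_Pt t. \<alpha> 0 = 0}"

text \<open>Pointwise addition and composition with maps written on the right: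
  a(\<alpha>\<beta>) = (a\<alpha>)\<beta>.\<close>
definition End_add :: "nat \<Rightarrow> (nat \<Rightarrow> nat) \<Rightarrow> (nat \<Rightarrow> nat) \<Rightarrow> (nat \<Rightarrow> nat)" where
  "End_add t \<alpha> \<beta> = (\<lambda>a\<in>Pt_carrier t. Pt_add (\<alpha> a) (\<beta> a))"

definition End_mult :: "nat \<Rightarrow> (nat \<Rightarrow> nat) \<Rightarrow> (nat \<Rightarrow> nat) \<Rightarrow> (nat \<Rightarrow> nat)" where
  "End_mult t \<alpha> \<beta> = (\<lambda>a\<in>Pt_carrier t. \<beta> (\<alpha> a))"

type_synonym mat = "nat \<Rightarrow> nat \<Rightarrow> nat"

definition rook :: "nat \<Rightarrow> mat set" where
  "rook t = {M. (\<forall>i j. M i j \<in> {0, 1})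
      \<and> (\<forall>i j. (i \<notin> {1..t} \<or> j \<notin> {1..t}) \<longrightarrow> M i j = 0)
      \<and> (\<forall>i\<in>{1..t}. card {j\<in>{1..t}. M i j = 1} \<le> 1)
      \<and> (\<forall>j\<in>{1..t}. card {i\<in>{1..t}. M i j = 1} \<le> 1)}"

definition rook_add :: "mat \<Rightarrow> mat \<Rightarrow> mat" where
  "rook_add A B = (\<lambda>i j. A i j * B i j)"

definition rook_mult :: "nat \<Rightarrow> mat \<Rightarrow> mat \<Rightarrow> mat" where
  "rook_mult t A B = (\<lambda>i j. \<Sum>k\<in>{1..t}. A i k * B k j)"

end

theory Submission
  imports Defs
begin

text \<open>An endomorphism of \<open>P\<^sub>t\<close> that fixes the top element \<open>0\<close> is the same as a partial
  injection of \<open>{1..t}\<close>: two distinct atoms can only be identified by sending both to \<open>0\<close>.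
  Recording the graph of such a partial injection as a 0-1 matrix gives a rook matrix; pointwise
  sum of maps becomes the Hadamard product (the sum keeps a value only where both maps agree) and
  composition becomes the matrix product. An endomorphism with \<open>\<alpha> 0 \<noteq> 0\<close> is constant, since
  \<open>\<alpha> 0 = \<alpha> (a + 0) = \<alpha> a + \<alpha> 0\<close> forces \<open>\<alpha> a = \<alpha> 0\<close>.\<close>

lemma in_Pt_carrier_iff [simp]: "a \<in> Pt_carrier t \<longleftrightarrow> a \<le> t"
  by (simp add: Pt_carrier_def)

lemma Pt_add_le [simp]: "a \<le> t \<Longrightarrow> b \<le> t \<Longrightarrow> Pt_add a b \<le> t"
  by (simp add: Pt_add_def)

lemma Pt_add_interchange: "Pt_add (Pt_add a b) (Pt_add c d) = Pt_add (Pt_add a c) (Pt_add b d)"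
  by (simp add: Pt_add_def)

lemma End_PtI:
  assumes "\<alpha> \<in> Pt_carrier t \<rightarrow>\<^sub>E Pt_carrier t"
    and "\<And>a b. a \<in> Pt_carrier t \<Longrightarrow> b \<in> Pt_carrier t \<Longrightarrow> \<alpha> (Pt_add a b) = Pt_add (\<alpha> a) (\<alpha> b)"
  shows "\<alpha> \<in> End_Pt t"
  using assms by (simp add: End_Pt_def)

lemma End_PtD:
  assumes "\<alpha> \<in> End_Pt t"
  shows "\<alpha> \<in> Pt_carrier t \<rightarrow>\<^sub>E Pt_carrier t"
    and "a \<in> Pt_carrier t \<Longrightarrow> b \<in> Pt_carrier t \<Longrightarrow> \<alpha> (Pt_add a b) = Pt_add (\<alpha> a) (\<alpha> b)"
  using assms by (simp_all add: End_Pt_def)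

lemma End_add_in_End_Pt:
  assumes \<alpha>: "\<alpha> \<in> End_Pt t" and \<beta>: "\<beta> \<in> End_Pt t"
  shows "End_add t \<alpha> \<beta> \<in> End_Pt t"
proof (rule End_PtI)
  show "End_add t \<alpha> \<beta> \<in> Pt_carrier t \<rightarrow>\<^sub>E Pt_carrier t"
    using End_PtD(1)[OF \<alpha>] End_PtD(1)[OF \<beta>]
    by (auto simp: End_add_def PiE_iff)
  fix a b assume ab: "a \<in> Pt_carrier t" "b \<in> Pt_carrier t"
  then show "End_add t \<alpha> \<beta> (Pt_add a b) = Pt_add (End_add t \<alpha> \<beta> a) (End_add t \<alpha> \<beta> b)"
    using End_PtD(2)[OF \<alpha> ab] End_PtD(2)[OF \<beta> ab]
    by (simp add: End_add_def Pt_add_interchange)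
qed

lemma End_mult_in_End_Pt:
  assumes \<alpha>: "\<alpha> \<in> End_Pt t" and \<beta>: "\<beta> \<in> End_Pt t"
  shows "End_mult t \<alpha> \<beta> \<in> End_Pt t"
proof (rule End_PtI)
  show "End_mult t \<alpha> \<beta> \<in> Pt_carrier t \<rightarrow>\<^sub>E Pt_carrier t"
    using End_PtD(1)[OF \<alpha>] End_PtD(1)[OF \<beta>] by (auto simp: End_mult_def)
  fix a b assume ab: "a \<in> Pt_carrier t" "b \<in> Pt_carrier t"
  then have "\<alpha> a \<in> Pt_carrier t" "\<alpha> b \<in> Pt_carrier t"
    using End_PtD(1)[OF \<alpha>] by auto
  then show "End_mult t \<alpha> \<beta> (Pt_add a b) = Pt_add (End_mult t \<alpha> \<beta> a) (End_mult t \<alpha> \<beta> b)"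
    using ab End_PtD(2)[OF \<alpha> ab] End_PtD(2)[OF \<beta>]
    by (simp add: End_mult_def)
qed

lemma End_add_in_End0_Pt:
  "\<alpha> \<in> End0_Pt t \<Longrightarrow> \<beta> \<in> End0_Pt t \<Longrightarrow> End_add t \<alpha> \<beta> \<in> End0_Pt t"
  by (simp add: End0_Pt_def End_add_in_End_Pt) (simp add: End_add_def Pt_add_def)

lemma End_mult_in_End0_Pt:
  "\<alpha> \<in> End0_Pt t \<Longrightarrow> \<beta> \<in> End0_Pt t \<Longrightarrow> End_mult t \<alpha> \<beta> \<in> End0_Pt t"
  by (simp add: End0_Pt_def End_mult_in_End_Pt) (simp add: End_mult_def)

lemma End_Pt_constant:
  assumes \<alpha>: "\<alpha> \<in> End_Pt t" and "\<alpha> 0 \<noteq> 0" and a: "a \<in> Pt_carrier t"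
  shows "\<alpha> a = \<alpha> 0"
proof (cases "a = 0")
  case False
  then have "Pt_add (\<alpha> a) (\<alpha> 0) = \<alpha> 0"
    using End_PtD(2)[OF \<alpha> a, of 0] by (simp add: Pt_add_def)
  with \<open>\<alpha> 0 \<noteq> 0\<close> show ?thesis
    by (metis Pt_add_def)
qed simp

lemma End0_Pt_iff_partial_injection:
  "\<alpha> \<in> End0_Pt t \<longleftrightarrow>
     \<alpha> \<in> Pt_carrier t \<rightarrow>\<^sub>E Pt_carrier t \<and> \<alpha> 0 = 0 \<and> inj_on \<alpha> {a \<in> Pt_carrier t. \<alpha> a \<noteq> 0}"
proof
  assume "\<alpha> \<in> End0_Pt t"
  then have hom: "\<alpha> \<in> End_Pt t" and "\<alpha> 0 = 0"
    by (simp_all add: End0_Pt_def)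
  have "a = b" if "a \<in> Pt_carrier t" "b \<in> Pt_carrier t" "\<alpha> a \<noteq> 0" "\<alpha> a = \<alpha> b" for a b
    using End_PtD(2)[OF hom that(1,2)] that(3,4) \<open>\<alpha> 0 = 0\<close>
    by (auto simp: Pt_add_def split: if_splits)
  then show "\<alpha> \<in> Pt_carrier t \<rightarrow>\<^sub>E Pt_carrier t \<and> \<alpha> 0 = 0 \<and> inj_on \<alpha> {a \<in> Pt_carrier t. \<alpha> a \<noteq> 0}"
    using End_PtD(1)[OF hom] \<open>\<alpha> 0 = 0\<close> by (auto intro: inj_onI)
next
  assume "\<alpha> \<in> Pt_carrier t \<rightarrow>\<^sub>E Pt_carrier t \<and> \<alpha> 0 = 0 \<and> inj_on \<alpha> {a \<in> Pt_carrier t. \<alpha> a \<noteq> 0}"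
  then have maps: "\<alpha> \<in> Pt_carrier t \<rightarrow>\<^sub>E Pt_carrier t" and "\<alpha> 0 = 0"
    and inj: "inj_on \<alpha> {a \<in> Pt_carrier t. \<alpha> a \<noteq> 0}"
    by blast+
  have "\<alpha> (Pt_add a b) = Pt_add (\<alpha> a) (\<alpha> b)" if "a \<in> Pt_carrier t" "b \<in> Pt_carrier t" for a b
    using inj_onD[OF inj, of a b] that \<open>\<alpha> 0 = 0\<close> by (auto simp: Pt_add_def)
  with maps \<open>\<alpha> 0 = 0\<close> show "\<alpha> \<in> End0_Pt t"
    by (auto simp: End0_Pt_def intro: End_PtI)
qed

lemma rook_iff:
  "M \<in> rook t \<longleftrightarrow>
     (\<forall>i j. M i j = 0 \<or> M i j = 1)
   \<and> (\<forall>i j. M i j = 1 \<longrightarrow> i \<in> {1..t} \<and> j \<in> {1..t})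
   \<and> (\<forall>i j k. M i j = 1 \<longrightarrow> M i k = 1 \<longrightarrow> j = k)
   \<and> (\<forall>i j k. M i k = 1 \<longrightarrow> M j k = 1 \<longrightarrow> i = j)"
proof -
  have card_le_one: "card {j \<in> {1..t}. P j} \<le> 1 \<longleftrightarrow> (\<forall>j\<in>{1..t}. \<forall>k\<in>{1..t}. P j \<longrightarrow> P k \<longrightarrow> j = k)"
    for P :: "nat \<Rightarrow> bool"
    using card_le_Suc0_iff_eq[of "{j \<in> {1..t}. P j}"] by auto
  show ?thesis
    unfolding rook_def mem_Collect_eq card_le_one
    by (smt (verit) empty_iff insert_iff zero_neq_one)
qed

lemma
  assumes "M \<in> rook t"
  shows rook_entry_cases: "M i j = 0 \<or> M i j = 1"
    and rook_entry_eq_1D: "M i j = 1 \<Longrightarrow> i \<in> {1..t} \<and> j \<in> {1..t}"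
    and rook_row_unique: "M i j = 1 \<Longrightarrow> M i k = 1 \<Longrightarrow> j = k"
    and rook_column_unique: "M i k = 1 \<Longrightarrow> M j k = 1 \<Longrightarrow> i = j"
  using assms unfolding rook_iff by blast+

definition rook_of_End :: "nat \<Rightarrow> (nat \<Rightarrow> nat) \<Rightarrow> mat" where
  "rook_of_End t \<alpha> = (\<lambda>i j. if i \<in> {1..t} \<and> j \<in> {1..t} \<and> \<alpha> i = j then 1 else 0)"

definition End_of_rook :: "nat \<Rightarrow> mat \<Rightarrow> (nat \<Rightarrow> nat)" where
  "End_of_rook t M = (\<lambda>a\<in>Pt_carrier t. if \<exists>j. M a j = 1 then THE j. M a j = 1 else 0)"

lemma rook_of_End_eq_1_iff:
  "rook_of_End t \<alpha> i j = 1 \<longleftrightarrow> i \<in> {1..t} \<and> j \<in> {1..t} \<and> \<alpha> i = j"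
  by (simp add: rook_of_End_def)

lemma End_of_rook_eq_iff:
  assumes M: "M \<in> rook t" and a: "a \<in> Pt_carrier t" and "j \<noteq> 0"
  shows "End_of_rook t M a = j \<longleftrightarrow> M a j = 1"
proof (cases "\<exists>k. M a k = 1")
  case True
  then obtain k where k: "M a k = 1" by blast
  then have "(THE k. M a k = 1) = k"
    using rook_row_unique[OF M] by (blast intro: the_equality)
  with True a have "End_of_rook t M a = k"
    by (simp add: End_of_rook_def)
  then show ?thesis
    using rook_row_unique[OF M] k by blast
next
  case False
  with a \<open>j \<noteq> 0\<close> show ?thesis
    by (simp add: End_of_rook_def)
qed

lemma End_of_rook_in_carrier:
  assumes M: "M \<in> rook t" and a: "a \<in> Pt_carrier t"
  shows "End_of_rook t M a \<in> Pt_carrier t"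
proof (cases "End_of_rook t M a = 0")
  case False
  then have "M a (End_of_rook t M a) = 1"
    using End_of_rook_eq_iff[OF M a] by blast
  then show ?thesis
    using rook_entry_eq_1D[OF M] by simp
qed simp

lemma rook_of_End_in_rook:
  assumes "\<alpha> \<in> End0_Pt t"
  shows "rook_of_End t \<alpha> \<in> rook t"
  unfolding rook_iff
proof (intro conjI)
  have inj: "inj_on \<alpha> {a \<in> Pt_carrier t. \<alpha> a \<noteq> 0}"
    using assms by (simp add: End0_Pt_iff_partial_injection)
  show "\<forall>i j. rook_of_End t \<alpha> i j = 0 \<or> rook_of_End t \<alpha> i j = 1"
    by (simp add: rook_of_End_def)
  show "\<forall>i j. rook_of_End t \<alpha> i j = 1 \<longrightarrow> i \<in> {1..t} \<and> j \<in> {1..t}"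
    unfolding rook_of_End_eq_1_iff by simp
  show "\<forall>i j k. rook_of_End t \<alpha> i j = 1 \<longrightarrow> rook_of_End t \<alpha> i k = 1 \<longrightarrow> j = k"
    unfolding rook_of_End_eq_1_iff by simp
  show "\<forall>i j k. rook_of_End t \<alpha> i k = 1 \<longrightarrow> rook_of_End t \<alpha> j k = 1 \<longrightarrow> i = j"
    unfolding rook_of_End_eq_1_iff by (auto intro: inj_onD[OF inj])
qed

lemma End_of_rook_in_End0_Pt:
  assumes M: "M \<in> rook t"
  shows "End_of_rook t M \<in> End0_Pt t"
  unfolding End0_Pt_iff_partial_injection
proof (intro conjI)
  show "End_of_rook t M \<in> Pt_carrier t \<rightarrow>\<^sub>E Pt_carrier t"
    using End_of_rook_in_carrier[OF M] by (auto simp: End_of_rook_def)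
  show "End_of_rook t M 0 = 0"
    using rook_entry_eq_1D[OF M, of 0] by (auto simp: End_of_rook_def)
  show "inj_on (End_of_rook t M) {a \<in> Pt_carrier t. End_of_rook t M a \<noteq> 0}"
  proof (rule inj_onI)
    fix a b
    assume "a \<in> {a \<in> Pt_carrier t. End_of_rook t M a \<noteq> 0}"
      and "b \<in> {a \<in> Pt_carrier t. End_of_rook t M a \<noteq> 0}"
      and "End_of_rook t M a = End_of_rook t M b"
    then have "M a (End_of_rook t M a) = 1" "M b (End_of_rook t M a) = 1"
      using End_of_rook_eq_iff[OF M, of a "End_of_rook t M a"]
        End_of_rook_eq_iff[OF M, of b "End_of_rook t M a"] by auto
    then show "a = b"
      by (rule rook_column_unique[OF M])
  qed
qed

lemma End_of_rook_of_End:
  assumes "\<alpha> \<in> End0_Pt t"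
  shows "End_of_rook t (rook_of_End t \<alpha>) = \<alpha>"
proof (rule extensionalityI)
  have maps: "\<alpha> \<in> Pt_carrier t \<rightarrow>\<^sub>E Pt_carrier t" and "\<alpha> 0 = 0"
    using assms by (simp_all add: End0_Pt_iff_partial_injection)
  show "End_of_rook t (rook_of_End t \<alpha>) \<in> extensional (Pt_carrier t)"
    by (simp add: End_of_rook_def)
  show "\<alpha> \<in> extensional (Pt_carrier t)"
    using maps by (simp add: PiE_iff)
  fix a assume a: "a \<in> Pt_carrier t"
  show "End_of_rook t (rook_of_End t \<alpha>) a = \<alpha> a"
  proof (cases "a \<noteq> 0 \<and> \<alpha> a \<noteq> 0")
    case True
    moreover have "\<alpha> a \<le> t"
      using maps a by auto
    ultimately show ?thesis
      using a End_of_rook_eq_iff[OF rook_of_End_in_rook[OF assms] a, of "\<alpha> a"]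
      unfolding rook_of_End_eq_1_iff by auto
  next
    case False
    with a \<open>\<alpha> 0 = 0\<close> show ?thesis
      by (auto simp: End_of_rook_def rook_of_End_def)
  qed
qed

lemma rook_of_End_of_rook:
  assumes M: "M \<in> rook t"
  shows "rook_of_End t (End_of_rook t M) = M"
proof (intro ext)
  fix i j
  have "rook_of_End t (End_of_rook t M) i j = 1 \<longleftrightarrow> M i j = 1"
    unfolding rook_of_End_eq_1_iff
    using End_of_rook_eq_iff[OF M, of i j] rook_entry_eq_1D[OF M, of i j] by auto
  then show "rook_of_End t (End_of_rook t M) i j = M i j"
    using rook_entry_cases[OF M, of i j] by (auto simp: rook_of_End_def split: if_splits)
qed

lemma bij_betw_rook_of_End: "bij_betw (rook_of_End t) (End0_Pt t) (rook t)"
  by (rule bij_betw_byWitness[where f' = "End_of_rook t"])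
    (auto simp: End_of_rook_of_End rook_of_End_of_rook rook_of_End_in_rook End_of_rook_in_End0_Pt)

lemma rook_of_End_add:
  "rook_of_End t (End_add t \<alpha> \<beta>) = rook_add (rook_of_End t \<alpha>) (rook_of_End t \<beta>)"
  by (intro ext) (auto simp: rook_of_End_def rook_add_def End_add_def Pt_add_def)

lemma rook_of_End_mult:
  assumes "\<alpha> \<in> End0_Pt t" "\<beta> \<in> End0_Pt t"
  shows "rook_of_End t (End_mult t \<alpha> \<beta>) = rook_mult t (rook_of_End t \<alpha>) (rook_of_End t \<beta>)"
proof (intro ext)
  fix i j
  have \<alpha>i: "\<alpha> i \<in> Pt_carrier t" if "i \<in> {1..t}"
    using that assms(1) by (auto simp: End0_Pt_iff_partial_injection)
  have "\<beta> 0 = 0"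
    using assms(2) by (simp add: End0_Pt_def)
  \<comment> \<open>row \<open>i\<close> of \<open>rook_of_End t \<alpha>\<close> vanishes outside column \<open>\<alpha> i\<close>\<close>
  have "rook_mult t (rook_of_End t \<alpha>) (rook_of_End t \<beta>) i j
      = (\<Sum>k\<in>{1..t}. if \<alpha> i = k then rook_of_End t \<alpha> i k * rook_of_End t \<beta> k j else 0)"
    unfolding rook_mult_def by (rule sum.cong) (auto simp: rook_of_End_def)
  also have "\<dots> = (if \<alpha> i \<in> {1..t} then rook_of_End t \<alpha> i (\<alpha> i) * rook_of_End t \<beta> (\<alpha> i) j else 0)"
    by (rule sum.delta') simp
  also have "\<dots> = rook_of_End t (End_mult t \<alpha> \<beta>) i j"
    using \<alpha>i \<open>\<beta> 0 = 0\<close> by (cases "\<alpha> i = 0") (auto simp: rook_of_End_def End_mult_def)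
  finally show "rook_of_End t (End_mult t \<alpha> \<beta>) i j = rook_mult t (rook_of_End t \<alpha>) (rook_of_End t \<beta>) i j"
    by simp
qed

theorem proposition3p9:
  fixes t :: nat
  assumes "t \<ge> 2"
  shows "End0_Pt t \<subseteq> End_Pt t
    \<and> (\<forall>\<alpha>\<in>End0_Pt t. \<forall>\<beta>\<in>End0_Pt t.
          End_add t \<alpha> \<beta> \<in> End0_Pt t \<and> End_mult t \<alpha> \<beta> \<in> End0_Pt t)
    \<and> (\<exists>f. bij_betw f (End0_Pt t) (rook t)
          \<and> (\<forall>\<alpha>\<in>End0_Pt t. \<forall>\<beta>\<in>End0_Pt t.
               f (End_add t \<alpha> \<beta>) = rook_add (f \<alpha>) (f \<beta>)
             \<and> f (End_mult t \<alpha> \<beta>) = rook_mult t (f \<alpha>) (f \<beta>)))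
    \<and> (\<forall>\<alpha>\<in>End_Pt t - End0_Pt t. \<exists>c. \<forall>a\<in>Pt_carrier t. \<alpha> a = c)"
proof (intro conjI)
  show "End0_Pt t \<subseteq> End_Pt t"
    by (auto simp: End0_Pt_def)
  show "\<forall>\<alpha>\<in>End0_Pt t. \<forall>\<beta>\<in>End0_Pt t. End_add t \<alpha> \<beta> \<in> End0_Pt t \<and> End_mult t \<alpha> \<beta> \<in> End0_Pt t"
    by (simp add: End_add_in_End0_Pt End_mult_in_End0_Pt)
  show "\<exists>f. bij_betw f (End0_Pt t) (rook t)
          \<and> (\<forall>\<alpha>\<in>End0_Pt t. \<forall>\<beta>\<in>End0_Pt t.
               f (End_add t \<alpha> \<beta>) = rook_add (f \<alpha>) (f \<beta>)
             \<and> f (End_mult t \<alpha> \<beta>) = rook_mult t (f \<alpha>) (f \<beta>))"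
    using bij_betw_rook_of_End rook_of_End_add rook_of_End_mult by blast
  show "\<forall>\<alpha>\<in>End_Pt t - End0_Pt t. \<exists>c. \<forall>a\<in>Pt_carrier t. \<alpha> a = c"
  proof
    fix \<alpha> assume "\<alpha> \<in> End_Pt t - End0_Pt t"
    then have "\<alpha> \<in> End_Pt t" "\<alpha> 0 \<noteq> 0"
      by (simp_all add: End0_Pt_def)
    then show "\<exists>c. \<forall>a\<in>Pt_carrier t. \<alpha> a = c"
      using End_Pt_constant by blast
  qed
qed

end
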